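(* For every integer $\ell\ge1$, let $E_1(-\Delta^{\mathbb{G}_\ell,N})$ be the smallest non-zero eigenvalue of the Neumann Laplacian $-\Delta^{\mathbb{G}_\ell,N}$ on $\ell^2(\mathbb{G}_\ell)$. Then $$\frac{15/2}{5^{\ell}}\le E_1(-\Delta^{\mathbb{G}_\ell,N})\le\frac{60}{5^{\ell}},$$ i.e. $\tfrac{15}{2}\,2^{-\ell\beta}\le E_1\le 60\cdot2^{-\ell\beta}$ with $\beta=\log5/\log2$.
   Context: Let $a_1=(0,0)$, $a_2=(1,0)$, $a_3=(1/2,\sqrt3/2)$, $T_0$ the unit equilateral triangle with these vertices, $T_{n+1}=T_n\cup(T_n+2^na_2)\cup(T_n+2^na_3)$. $\mathbb{G}_\ell$ is the set of vertices of the unit triangles (translates of $T_0$) in $T_\ell$, with $x\sim y$ iff $x\ne y$ lie on a common unit triangle. The Neumann Laplacian is the graph Laplacian of the induced subgraph: $-\Delta^{\mathbb{G}_\ell,N}f(x)=\sum_{y\in\mathbb{G}_\ell,y\sim x}(f(x)-f(y))$ for $f\in\ell^2(\mathbb{G}_\ell)$. *)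

theory Defs
  imports "HOL-Analysis.Analysis"
begin

type_synonym point = "real \<times> real"

definition sg_a1 :: point where "sg_a1 = (0, 0)"
definition sg_a2 :: point where "sg_a2 = (1, 0)"
definition sg_a3 :: point where "sg_a3 = (1/2, sqrt 3 / 2)"

definition sg_T0 :: "point set" where "sg_T0 = convex hull {sg_a1, sg_a2, sg_a3}"

text \<open>Translation vectors of the unit triangles making up T_n, following the recursion
  T_{n+1} = T_n \<union> (T_n + 2^n a2) \<union> (T_n + 2^n a3).\<close>
fun sg_offsets :: "nat \<Rightarrow> point set" where
  "sg_offsets 0 = {(0, 0)}"
| "sg_offsets (Suc n) = sg_offsets n \<union> (\<lambda>v. v + (2::real) ^ n *\<^sub>R sg_a2) ` sg_offsets n
                                     \<union> (\<lambda>v. v + (2::real) ^ n *\<^sub>R sg_a3) ` sg_offsets n"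

definition sg_unit_triangles :: "nat \<Rightarrow> point set set" where
  "sg_unit_triangles n = (\<lambda>v. (\<lambda>x. x + v) ` sg_T0) ` sg_offsets n"

definition sg_T :: "nat \<Rightarrow> point set" where
  "sg_T n = \<Union> (sg_unit_triangles n)"

definition tri_vertices :: "point \<Rightarrow> point set" where
  "tri_vertices v = {v + sg_a1, v + sg_a2, v + sg_a3}"

definition sg_G :: "nat \<Rightarrow> point set" where
  "sg_G l = (\<Union>v\<in>sg_offsets l. tri_vertices v)"

definition sg_adj :: "nat \<Rightarrow> point \<Rightarrow> point \<Rightarrow> bool" where
  "sg_adj l x y \<longleftrightarrow> x \<noteq> y \<and> (\<exists>v\<in>sg_offsets l. x \<in> tri_vertices v \<and> y \<in> tri_vertices v)"

text \<open>Neumann Laplacian -Delta^{G_l,N} (graph Laplacian of the induced subgraph).\<close>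
definition neg_neumann_laplacian :: "nat \<Rightarrow> (point \<Rightarrow> real) \<Rightarrow> point \<Rightarrow> real" where
  "neg_neumann_laplacian l f x = (\<Sum>y\<in>{y\<in>sg_G l. sg_adj l x y}. f x - f y)"

definition neumann_eigenvalues :: "nat \<Rightarrow> real set" where
  "neumann_eigenvalues l = {mu. \<exists>f. (\<exists>x\<in>sg_G l. f x \<noteq> 0) \<and>
       (\<forall>x\<in>sg_G l. neg_neumann_laplacian l f x = mu * f x)}"

definition E1_neumann :: "nat \<Rightarrow> real" where
  "E1_neumann l = Min (neumann_eigenvalues l - {0})"

end

(*
  In integer coordinates the offsets of level l+1 are the children 2v, 2v + e1, 2v + e2 of those
  of level l, so the energy at level l+1 is a sum over the coarse triangles of the energy of a
  once-subdivided triangle. That energy is at least 3/5 of the energy of the coarse triangle, with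
  equality exactly for the harmonic extension, which puts (2a + 2b + c)/5 on the midpoint of ab.
  Combined with the fact that every vertex lies in at most two triangles, this propagates a
  Poincare inequality with constant lam at level l to one with constant lam/5 at level l+1; at
  level 1 the constant 3/2 is a sum-of-squares identity.

  Conversely, iterating the harmonic extension of (1, -1, 0) on the level-0 triangle gives a
  function of energy 6 (3/5)^l whose sum of squares about any constant is at least 3^l/5. The
  minimum of the energy on the unit sphere of mean-zero functions is attained by compactness, is
  an eigenvalue by the Euler-Lagrange equation, and is at most 30/5^l.
*)

theory Submission
  imports Defs "HOL-Library.Function_Algebras"
begin

section \<open>Integer coordinates\<close>

text \<open>The point with coordinates \<open>(i, j)\<close> with respect to the basis \<open>a2, a3\<close>.\<close>

definition lattice_pt :: "int \<times> int \<Rightarrow> point" where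
  "lattice_pt p = (of_int (fst p) + of_int (snd p) / 2, of_int (snd p) * sqrt 3 / 2)"

fun lat_offsets :: "nat \<Rightarrow> (int \<times> int) set" where
  "lat_offsets 0 = {(0, 0)}"
| "lat_offsets (Suc n) = lat_offsets n \<union> (\<lambda>v. (fst v + 2 ^ n, snd v)) ` lat_offsets n
                                     \<union> (\<lambda>v. (fst v, snd v + 2 ^ n)) ` lat_offsets n"

definition lat_tri :: "int \<times> int \<Rightarrow> (int \<times> int) set" where
  "lat_tri v = {v, (fst v + 1, snd v), (fst v, snd v + 1)}"

definition lat_G :: "nat \<Rightarrow> (int \<times> int) set" where
  "lat_G l = (\<Union>v\<in>lat_offsets l. lat_tri v)"

definition lat_adj :: "nat \<Rightarrow> int \<times> int \<Rightarrow> int \<times> int \<Rightarrow> bool" where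
  "lat_adj l p q \<longleftrightarrow> p \<noteq> q \<and> (\<exists>v\<in>lat_offsets l. p \<in> lat_tri v \<and> q \<in> lat_tri v)"

definition lat_laplacian :: "nat \<Rightarrow> (int \<times> int \<Rightarrow> real) \<Rightarrow> int \<times> int \<Rightarrow> real" where
  "lat_laplacian l g p = (\<Sum>q\<in>{q\<in>lat_G l. lat_adj l p q}. g p - g q)"

definition lat_eigenvalues :: "nat \<Rightarrow> real set" where
  "lat_eigenvalues l = {mu. \<exists>g. (\<exists>p\<in>lat_G l. g p \<noteq> 0) \<and>
       (\<forall>p\<in>lat_G l. lat_laplacian l g p = mu * g p)}"

lemma inj_lattice_pt: "inj lattice_pt"
proof (rule injI)
  fix p q assume eq: "lattice_pt p = lattice_pt q"
  then have "snd p = snd q"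
    by (simp add: lattice_pt_def)
  with eq show "p = q"
    by (simp add: lattice_pt_def prod_eq_iff)
qed

lemma sg_offsets_eq: "sg_offsets l = lattice_pt ` lat_offsets l"
proof (induction l)
  case 0
  show ?case by (simp add: lattice_pt_def)
next
  case (Suc n)
  have "(\<lambda>v. v + (2::real) ^ n *\<^sub>R sg_a2) ` lattice_pt ` lat_offsets n
          = lattice_pt ` (\<lambda>v. (fst v + 2 ^ n, snd v)) ` lat_offsets n"
    by (force simp: image_image lattice_pt_def sg_a2_def)
  moreover have "(\<lambda>v. v + (2::real) ^ n *\<^sub>R sg_a3) ` lattice_pt ` lat_offsets n
          = lattice_pt ` (\<lambda>v. (fst v, snd v + 2 ^ n)) ` lat_offsets n"
    by (force simp: image_image lattice_pt_def sg_a3_def field_simps)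
  ultimately show ?case
    using Suc by (simp add: image_Un)
qed

lemma tri_vertices_lattice_pt: "tri_vertices (lattice_pt v) = lattice_pt ` lat_tri v"
  by (simp add: tri_vertices_def lat_tri_def sg_a1_def sg_a2_def sg_a3_def lattice_pt_def field_simps)

lemma sg_G_eq: "sg_G l = lattice_pt ` lat_G l"
  by (auto simp: sg_G_def lat_G_def sg_offsets_eq tri_vertices_lattice_pt)

lemma sg_adj_lattice_pt: "sg_adj l (lattice_pt p) (lattice_pt q) \<longleftrightarrow> lat_adj l p q"
proof -
  have "lattice_pt p \<in> lattice_pt ` S \<longleftrightarrow> p \<in> S" for S p
    using inj_lattice_pt by (simp add: inj_image_mem_iff)
  then show ?thesis
    using inj_lattice_pt
    by (auto simp: sg_adj_def lat_adj_def sg_offsets_eq tri_vertices_lattice_pt inj_eq)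
qed

lemma neg_neumann_laplacian_lattice_pt:
  "neg_neumann_laplacian l f (lattice_pt p) = lat_laplacian l (f \<circ> lattice_pt) p"
proof -
  have "{y\<in>sg_G l. sg_adj l (lattice_pt p) y} = lattice_pt ` {q\<in>lat_G l. lat_adj l p q}"
    by (auto simp: sg_G_eq sg_adj_lattice_pt)
  then have "neg_neumann_laplacian l f (lattice_pt p)
      = (\<Sum>q\<in>{q\<in>lat_G l. lat_adj l p q}. f (lattice_pt p) - f (lattice_pt q))"
    unfolding neg_neumann_laplacian_def
    by (simp add: sum.reindex inj_on_subset[OF inj_lattice_pt])
  then show ?thesis
    by (simp add: lat_laplacian_def)
qed

lemma neumann_eigenvalues_eq: "neumann_eigenvalues l = lat_eigenvalues l"
proof (intro set_eqI iffI)
  fix mu assume "mu \<in> neumann_eigenvalues l"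
  then obtain f where "\<exists>x\<in>sg_G l. f x \<noteq> 0" "\<forall>x\<in>sg_G l. neg_neumann_laplacian l f x = mu * f x"
    by (auto simp: neumann_eigenvalues_def)
  then show "mu \<in> lat_eigenvalues l"
    unfolding lat_eigenvalues_def
    by (auto simp: sg_G_eq neg_neumann_laplacian_lattice_pt intro!: exI[of _ "f \<circ> lattice_pt"])
next
  fix mu assume "mu \<in> lat_eigenvalues l"
  then obtain g where "\<exists>p\<in>lat_G l. g p \<noteq> 0" "\<forall>p\<in>lat_G l. lat_laplacian l g p = mu * g p"
    by (auto simp: lat_eigenvalues_def)
  then show "mu \<in> neumann_eigenvalues l"
    unfolding neumann_eigenvalues_def
    by (intro CollectI exI[of _ "g \<circ> inv lattice_pt"])
       (auto simp: sg_G_eq neg_neumann_laplacian_lattice_pt comp_def inv_f_f[OF inj_lattice_pt])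
qed

section \<open>Self-similarity\<close>

definition double :: "int \<times> int \<Rightarrow> int \<times> int" where
  "double v = (2 * fst v, 2 * snd v)"

definition lat_children :: "int \<times> int \<Rightarrow> (int \<times> int) set" where
  "lat_children v = {double v, (2 * fst v + 1, 2 * snd v), (2 * fst v, 2 * snd v + 1)}"

lemma mem_UN_lat_children:
  "q \<in> (\<Union>v\<in>S. lat_children v) \<longleftrightarrow> \<not> (odd (fst q) \<and> odd (snd q)) \<and> (fst q div 2, snd q div 2) \<in> S"
proof
  assume "q \<in> (\<Union>v\<in>S. lat_children v)"
  then show "\<not> (odd (fst q) \<and> odd (snd q)) \<and> (fst q div 2, snd q div 2) \<in> S"
    by (auto simp: lat_children_def double_def)
next
  assume q: "\<not> (odd (fst q) \<and> odd (snd q)) \<and> (fst q div 2, snd q div 2) \<in> S"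
  then have "q \<in> lat_children (fst q div 2, snd q div 2)"
    by (cases q) (auto simp: lat_children_def double_def elim!: evenE oddE)
  with q show "q \<in> (\<Union>v\<in>S. lat_children v)"
    by blast
qed

lemma lat_children_div2: "w \<in> lat_children v \<Longrightarrow> (fst w div 2, snd w div 2) = v"
  by (auto simp: lat_children_def double_def)

lemma lat_offsets_Suc: "lat_offsets (Suc l) = (\<Union>v\<in>lat_offsets l. lat_children v)"
proof (induction l)
  case 0
  show ?case by (auto simp: lat_children_def double_def)
next
  case (Suc n)
  have shift1: "(\<Union>v\<in>(\<lambda>v. (fst v + d, snd v)) ` S. lat_children v)
      = (\<lambda>v. (fst v + 2 * d, snd v)) ` (\<Union>v\<in>S. lat_children v)" for d S
    by (force simp: lat_children_def double_def algebra_simps)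
  have shift2: "(\<Union>v\<in>(\<lambda>v. (fst v, snd v + d)) ` S. lat_children v)
      = (\<lambda>v. (fst v, snd v + 2 * d)) ` (\<Union>v\<in>S. lat_children v)" for d S
    by (force simp: lat_children_def double_def algebra_simps)
  have "(\<Union>v\<in>lat_offsets (Suc n). lat_children v)
      = (\<Union>v\<in>lat_offsets n. lat_children v)
        \<union> (\<Union>v\<in>(\<lambda>v. (fst v + 2 ^ n, snd v)) ` lat_offsets n. lat_children v)
        \<union> (\<Union>v\<in>(\<lambda>v. (fst v, snd v + 2 ^ n)) ` lat_offsets n. lat_children v)"
    by simp
  also have "\<dots> = lat_offsets (Suc (Suc n))"
    unfolding shift1 shift2 Suc[symmetric] by simp
  finally show ?case ..
qed

lemma finite_lat_offsets: "finite (lat_offsets l)"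
  by (induction l) auto

lemma finite_lat_tri: "finite (lat_tri v)"
  by (simp add: lat_tri_def)

lemma finite_lat_G: "finite (lat_G l)"
  by (simp add: lat_G_def finite_lat_offsets finite_lat_tri)

lemma lat_G_nonempty: "lat_G l \<noteq> {}"
proof -
  have "(0, 0) \<in> lat_offsets l"
    by (induction l) auto
  then show ?thesis
    by (auto simp: lat_G_def lat_tri_def)
qed

lemma lat_tri_subset_lat_G: "v \<in> lat_offsets l \<Longrightarrow> lat_tri v \<subseteq> lat_G l"
  by (auto simp: lat_G_def)

lemma lat_tri_inter_at_most_one:
  "v \<noteq> w \<Longrightarrow> p \<in> lat_tri v \<Longrightarrow> p \<in> lat_tri w \<Longrightarrow> q \<in> lat_tri v \<Longrightarrow> q \<in> lat_tri w \<Longrightarrow> p = q"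
  by (auto simp: lat_tri_def prod_eq_iff)

lemma sum_lat_tri:
  "(\<Sum>p\<in>lat_tri v. F p) = F v + F (fst v + 1, snd v) + F (fst v, snd v + 1)"
proof -
  have "v \<noteq> (fst v + 1, snd v)" "v \<noteq> (fst v, snd v + 1)" "(fst v + 1, snd v) \<noteq> (fst v, snd v + 1)"
    by (auto simp: prod_eq_iff)
  then show ?thesis
    by (simp add: lat_tri_def add.assoc)
qed

lemma sum_lat_children:
  "(\<Sum>w\<in>lat_children v. F w) = F (double v) + F (2 * fst v + 1, 2 * snd v) + F (2 * fst v, 2 * snd v + 1)"
proof -
  have "double v \<noteq> (2 * fst v + 1, 2 * snd v)" "double v \<noteq> (2 * fst v, 2 * snd v + 1)"
      "(2 * fst v + 1, 2 * snd v) \<noteq> (2 * fst v, 2 * snd v + 1)"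
    by (auto simp: double_def prod_eq_iff)
  then show ?thesis
    by (simp add: lat_children_def add.assoc)
qed

lemma sum_lat_offsets_Suc:
  "(\<Sum>w\<in>lat_offsets (Suc l). F w)
     = (\<Sum>v\<in>lat_offsets l. F (double v) + F (2 * fst v + 1, 2 * snd v) + F (2 * fst v, 2 * snd v + 1))"
proof -
  have "(\<Sum>w\<in>lat_offsets (Suc l). F w) = (\<Sum>v\<in>lat_offsets l. \<Sum>w\<in>lat_children v. F w)"
    unfolding lat_offsets_Suc
  proof (rule sum.UNION_disjoint)
    show "\<forall>v\<in>lat_offsets l. \<forall>w\<in>lat_offsets l. v \<noteq> w \<longrightarrow> lat_children v \<inter> lat_children w = {}"
      using lat_children_div2 by blast
  qed (simp_all add: finite_lat_offsets lat_children_def)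
  then show ?thesis
    by (simp add: sum_lat_children)
qed

text \<open>A vertex \<open>p\<close> can only lie in the triangles with offsets \<open>p\<close>, \<open>p - e1\<close>, \<open>p - e2\<close>,
  and the three are never all present: their images one level down would again be three such offsets.\<close>

lemma not_all_three_offsets:
  "\<not> (p \<in> lat_offsets l \<and> (fst p - 1, snd p) \<in> lat_offsets l \<and> (fst p, snd p - 1) \<in> lat_offsets l)"
proof (induction l arbitrary: p)
  case 0
  show ?case by auto
next
  case (Suc l)
  show ?case
  proof
    obtain a b where p: "p = (a, b)" by fastforce
    assume "p \<in> lat_offsets (Suc l) \<and> (fst p - 1, snd p) \<in> lat_offsets (Suc l)
              \<and> (fst p, snd p - 1) \<in> lat_offsets (Suc l)"
    then have in_l: "\<not> (odd a \<and> odd b) \<and> (a div 2, b div 2) \<in> lat_offsets l"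
       "\<not> (odd (a - 1) \<and> odd b) \<and> ((a - 1) div 2, b div 2) \<in> lat_offsets l"
       "\<not> (odd a \<and> odd (b - 1)) \<and> (a div 2, (b - 1) div 2) \<in> lat_offsets l"
      unfolding lat_offsets_Suc mem_UN_lat_children by (auto simp: p)
    then have "even a" "even b"
      by auto
    then have "(a - 1) div 2 = a div 2 - 1" "(b - 1) div 2 = b div 2 - 1"
      by (auto elim!: evenE)
    with in_l Suc.IH[of "(a div 2, b div 2)"] show False
      by auto
  qed
qed

lemma card_triangles_at_vertex: "card {v\<in>lat_offsets l. p \<in> lat_tri v} \<le> 2"
proof -
  let ?a = "p" and ?b = "(fst p - 1, snd p)" and ?c = "(fst p, snd p - 1)"
  have at_vertex: "{v\<in>lat_offsets l. p \<in> lat_tri v} \<subseteq> {?a, ?b, ?c} \<inter> lat_offsets l"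
    by (auto simp: lat_tri_def)
  have "{?a, ?b, ?c} \<inter> lat_offsets l \<subseteq> {?b, ?c} \<or> {?a, ?b, ?c} \<inter> lat_offsets l \<subseteq> {?a, ?c}
      \<or> {?a, ?b, ?c} \<inter> lat_offsets l \<subseteq> {?a, ?b}"
    using not_all_three_offsets[of p l] by auto
  moreover have "card {x, y} \<le> 2" for x y :: "int \<times> int"
    by (simp add: card_insert_le_m1)
  ultimately have "card ({?a, ?b, ?c} \<inter> lat_offsets l) \<le> 2"
    by (meson card_mono finite.emptyI finite.insertI order_trans)
  then show ?thesis
    using card_mono[OF _ at_vertex] by (meson finite_Int finite.emptyI finite.insertI order_trans)
qed

section \<open>Energy and Green's formula\<close>

definition tri_form :: "real \<Rightarrow> real \<Rightarrow> real \<Rightarrow> real \<Rightarrow> real \<Rightarrow> real \<Rightarrow> real" where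
  "tri_form a b c a' b' c' = (a - b) * (a' - b') + (b - c) * (b' - c') + (a - c) * (a' - c')"

definition tri_energy :: "real \<Rightarrow> real \<Rightarrow> real \<Rightarrow> real" where
  "tri_energy a b c = (a - b)\<^sup>2 + (b - c)\<^sup>2 + (a - c)\<^sup>2"

definition energy_form :: "nat \<Rightarrow> (int \<times> int \<Rightarrow> real) \<Rightarrow> (int \<times> int \<Rightarrow> real) \<Rightarrow> real" where
  "energy_form l g h = (\<Sum>v\<in>lat_offsets l. tri_form (g v) (g (fst v + 1, snd v)) (g (fst v, snd v + 1))
                                                (h v) (h (fst v + 1, snd v)) (h (fst v, snd v + 1)))"

definition energy :: "nat \<Rightarrow> (int \<times> int \<Rightarrow> real) \<Rightarrow> real" where
  "energy l g = (\<Sum>v\<in>lat_offsets l. tri_energy (g v) (g (fst v + 1, snd v)) (g (fst v, snd v + 1)))"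

lemma energy_eq_energy_form: "energy l g = energy_form l g g"
  by (simp add: energy_def energy_form_def tri_form_def tri_energy_def power2_eq_square)

lemma energy_form_commute: "energy_form l g h = energy_form l h g"
  by (simp add: energy_form_def tri_form_def mult.commute)

lemma energy_nonneg: "0 \<le> energy l g"
  by (simp add: energy_def tri_energy_def sum_nonneg)

lemma energy_diff_const: "energy l (\<lambda>p. g p - c) = energy l g"
  by (simp add: energy_def tri_energy_def)

lemma energy_scale: "energy l (\<lambda>p. a * g p) = a\<^sup>2 * energy l g"
  by (simp add: energy_def tri_energy_def sum_distrib_left power2_eq_square algebra_simps)

lemma energy_add_scaled:
  "energy l (\<lambda>p. g p + s * h p) = energy l g + 2 * s * energy_form l g h + s\<^sup>2 * energy l h"
proof -
  have "energy l (\<lambda>p. g p + s * h p) = (\<Sum>v\<in>lat_offsets l. tri_energy (g v) (g (fst v + 1, snd v)) (g (fst v, snd v + 1))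
       + 2 * s * tri_form (g v) (g (fst v + 1, snd v)) (g (fst v, snd v + 1)) (h v) (h (fst v + 1, snd v)) (h (fst v, snd v + 1))
       + s\<^sup>2 * tri_energy (h v) (h (fst v + 1, snd v)) (h (fst v, snd v + 1)))"
    unfolding energy_def
    by (rule sum.cong[OF refl]) (simp add: tri_energy_def tri_form_def power2_eq_square algebra_simps)
  then show ?thesis
    by (simp add: energy_def energy_form_def sum.distrib sum_distrib_left)
qed

lemma energy_cong: "(\<And>p. p \<in> lat_G l \<Longrightarrow> g p = g' p) \<Longrightarrow> energy l g = energy l g'"
  unfolding energy_def
proof (rule sum.cong[OF refl])
  fix v assume "v \<in> lat_offsets l" and eq: "\<And>p. p \<in> lat_G l \<Longrightarrow> g p = g' p"
  then have "v \<in> lat_G l" "(fst v + 1, snd v) \<in> lat_G l" "(fst v, snd v + 1) \<in> lat_G l"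
    using lat_tri_subset_lat_G[of v l] by (auto simp: lat_tri_def)
  with eq show "tri_energy (g v) (g (fst v + 1, snd v)) (g (fst v, snd v + 1))
      = tri_energy (g' v) (g' (fst v + 1, snd v)) (g' (fst v, snd v + 1))"
    by simp
qed

lemma lat_adj_in_lat_G: "lat_adj l p q \<Longrightarrow> p \<in> lat_G l \<and> q \<in> lat_G l"
  by (auto simp: lat_adj_def lat_G_def)

lemma sum_lat_adj:
  "(\<Sum>(p, q)\<in>{(p, q). lat_adj l p q}. F p q)
     = (\<Sum>v\<in>lat_offsets l. \<Sum>(p, q)\<in>{(p, q). p \<in> lat_tri v \<and> q \<in> lat_tri v \<and> p \<noteq> q}. F p q)"
proof -
  have "{(p, q). lat_adj l p q} = (\<Union>v\<in>lat_offsets l. {(p, q). p \<in> lat_tri v \<and> q \<in> lat_tri v \<and> p \<noteq> q})"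
    by (auto simp: lat_adj_def)
  also have "(\<Sum>(p, q)\<in>\<dots>. F p q)
      = (\<Sum>v\<in>lat_offsets l. \<Sum>(p, q)\<in>{(p, q). p \<in> lat_tri v \<and> q \<in> lat_tri v \<and> p \<noteq> q}. F p q)"
  proof (rule sum.UNION_disjoint)
    show "\<forall>v\<in>lat_offsets l. finite {(p, q). p \<in> lat_tri v \<and> q \<in> lat_tri v \<and> p \<noteq> q}"
      by (auto intro: finite_subset[of _ "lat_tri _ \<times> lat_tri _"] simp: finite_lat_tri)
    show "\<forall>v\<in>lat_offsets l. \<forall>w\<in>lat_offsets l. v \<noteq> w \<longrightarrow>
        {(p, q). p \<in> lat_tri v \<and> q \<in> lat_tri v \<and> p \<noteq> q} \<inter> {(p, q). p \<in> lat_tri w \<and> q \<in> lat_tri w \<and> p \<noteq> q} = {}"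
      using lat_tri_inter_at_most_one by blast
  qed (rule finite_lat_offsets)
  finally show ?thesis .
qed

lemma sum_lat_tri_pairs:
  "(\<Sum>(p, q)\<in>{(p, q). p \<in> lat_tri v \<and> q \<in> lat_tri v \<and> p \<noteq> q}. (h p - h q) * (g p - g q)) =
   2 * tri_form (g v) (g (fst v + 1, snd v)) (g (fst v, snd v + 1)) (h v) (h (fst v + 1, snd v)) (h (fst v, snd v + 1))"
proof -
  have "(\<Sum>(p, q)\<in>{(p, q). p \<in> lat_tri v \<and> q \<in> lat_tri v \<and> p \<noteq> q}. (h p - h q) * (g p - g q)) =
        (\<Sum>p\<in>lat_tri v. \<Sum>q\<in>lat_tri v. (h p - h q) * (g p - g q))"
    by (subst sum.cartesian_product) (rule sum.mono_neutral_left, auto simp: finite_lat_tri)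
  then show ?thesis
    unfolding sum_lat_tri tri_form_def by algebra
qed

text \<open>Green's formula: summing \<open>h p (g p - g q)\<close> over ordered adjacent pairs and symmetrizing
  turns the left side into half the sum of \<open>(h p - h q) (g p - g q)\<close>.\<close>

lemma sum_mult_lat_laplacian: "(\<Sum>p\<in>lat_G l. h p * lat_laplacian l g p) = energy_form l g h"
proof -
  let ?A = "{(p, q). lat_adj l p q}"
  have "(\<Sum>p\<in>lat_G l. h p * lat_laplacian l g p)
      = (\<Sum>(p, q)\<in>(SIGMA p:lat_G l. {q\<in>lat_G l. lat_adj l p q}). h p * (g p - g q))"
    by (simp add: lat_laplacian_def sum_distrib_left sum.Sigma finite_lat_G)
  also have "(SIGMA p:lat_G l. {q\<in>lat_G l. lat_adj l p q}) = ?A"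
    using lat_adj_in_lat_G by auto
  finally have half: "(\<Sum>p\<in>lat_G l. h p * lat_laplacian l g p) = (\<Sum>(p, q)\<in>?A. h p * (g p - g q))" .
  have "(\<Sum>(p, q)\<in>?A. h p * (g p - g q)) = (\<Sum>(p, q)\<in>(\<lambda>(p, q). (q, p)) ` ?A. h p * (g p - g q))"
    by (rule arg_cong[where f = "sum _"]) (auto simp: lat_adj_def image_iff)
  also have "\<dots> = (\<Sum>(p, q)\<in>?A. h q * (g q - g p))"
    by (subst sum.reindex) (auto simp: inj_on_def case_prod_beta comp_def)
  finally have "2 * (\<Sum>(p, q)\<in>?A. h p * (g p - g q))
      = (\<Sum>(p, q)\<in>?A. h p * (g p - g q) + h q * (g q - g p))"
    by (simp add: sum.distrib case_prod_beta)
  also have "\<dots> = (\<Sum>(p, q)\<in>?A. (h p - h q) * (g p - g q))"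
    by (rule sum.cong) (auto simp: algebra_simps)
  also have "\<dots> = 2 * energy_form l g h"
    by (simp add: sum_lat_adj sum_lat_tri_pairs energy_form_def sum_distrib_left)
  finally show ?thesis
    using half by simp
qed

lemma energy_eq_sum_lat_laplacian: "energy l g = (\<Sum>p\<in>lat_G l. g p * lat_laplacian l g p)"
  by (simp add: sum_mult_lat_laplacian energy_eq_energy_form)

lemma sum_lat_laplacian: "(\<Sum>p\<in>lat_G l. lat_laplacian l g p) = 0"
  using sum_mult_lat_laplacian[where h = "\<lambda>_. 1" and l = l and g = g]
  by (simp add: energy_form_def tri_form_def)

text \<open>In a coarse triangle with corner values \<open>a\<close>, \<open>b\<close>, \<open>c\<close>, the refined triangle carries
  \<open>x\<close> on the midpoint of \<open>ab\<close>, \<open>y\<close> on that of \<open>ac\<close> and \<open>z\<close> on that of \<open>bc\<close>.\<close>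

definition refined_energy :: "real \<Rightarrow> real \<Rightarrow> real \<Rightarrow> real \<Rightarrow> real \<Rightarrow> real \<Rightarrow> real" where
  "refined_energy a b c x y z = tri_energy a x y + tri_energy x b z + tri_energy y z c"

text \<open>The value of the harmonic extension at the midpoint of \<open>ab\<close> (the "2/5--2/5--1/5 rule").\<close>

definition harm_mid :: "real \<Rightarrow> real \<Rightarrow> real \<Rightarrow> real" where
  "harm_mid a b c = (2 * a + 2 * b + c) / 5"

lemma refined_energy_eq:
  fixes a b c x y z :: real
  defines "g1 \<equiv> x - harm_mid a b c" and "g2 \<equiv> y - harm_mid a c b" and "g3 \<equiv> z - harm_mid b c a"
  shows "refined_energy a b c x y z
    = 3/5 * tri_energy a b c + 4 * (g1\<^sup>2 + g2\<^sup>2 + g3\<^sup>2) - 2 * (g1 * g2 + g1 * g3 + g2 * g3)"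
  unfolding refined_energy_def tri_energy_def harm_mid_def g1_def g2_def g3_def
  by (simp add: field_simps power2_eq_square)

lemma refined_energy_harmonic:
  "refined_energy a b c (harm_mid a b c) (harm_mid a c b) (harm_mid b c a) = 3/5 * tri_energy a b c"
  by (simp add: refined_energy_eq)

lemma refined_energy_ge:
  "3/5 * tri_energy a b c
     + 2 * ((x - harm_mid a b c)\<^sup>2 + (y - harm_mid a c b)\<^sup>2 + (z - harm_mid b c a)\<^sup>2)
   \<le> refined_energy a b c x y z"
proof -
  have "2 * (g1\<^sup>2 + g2\<^sup>2 + g3\<^sup>2) \<le> 4 * (g1\<^sup>2 + g2\<^sup>2 + g3\<^sup>2) - 2 * (g1 * g2 + g1 * g3 + g2 * g3)"
    for g1 g2 g3 :: real
  proof -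
    have "4 * (g1\<^sup>2 + g2\<^sup>2 + g3\<^sup>2) - 2 * (g1 * g2 + g1 * g3 + g2 * g3)
        = 2 * (g1\<^sup>2 + g2\<^sup>2 + g3\<^sup>2) + ((g1 - g2)\<^sup>2 + (g1 - g3)\<^sup>2 + (g2 - g3)\<^sup>2)"
      by (simp add: power2_eq_square algebra_simps)
    then show ?thesis
      by simp
  qed
  from this[of "x - harm_mid a b c" "y - harm_mid a c b" "z - harm_mid b c a"] show ?thesis
    using refined_energy_eq[of a b c x y z] by linarith
qed

lemma refined_energy_ge_tri_energy: "3/5 * tri_energy a b c \<le> refined_energy a b c x y z"
  by (rule order_trans[OF _ refined_energy_ge]) simp

lemma sum_squares_harm_mid:
  "(harm_mid a b c)\<^sup>2 + (harm_mid a c b)\<^sup>2 + (harm_mid b c a)\<^sup>2 = a\<^sup>2 + b\<^sup>2 + c\<^sup>2 - 8/25 * tri_energy a b c"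
  by (simp add: harm_mid_def tri_energy_def field_simps power2_eq_square)

lemma square_add_le:
  fixes h g t :: real
  assumes "t > 0"
  shows "(h + g)\<^sup>2 \<le> (1 + t) * h\<^sup>2 + (1 + t) / t * g\<^sup>2"
proof -
  have "t * ((1 + t) * h\<^sup>2 + (1 + t) / t * g\<^sup>2 - (h + g)\<^sup>2) = (t * h - g)\<^sup>2"
    using assms by (simp add: field_simps power2_eq_square)
  then have "0 \<le> t * ((1 + t) * h\<^sup>2 + (1 + t) / t * g\<^sup>2 - (h + g)\<^sup>2)"
    by simp
  with assms show ?thesis
    by (simp add: zero_le_mult_iff)
qed

text \<open>The midpoint values are controlled by the corner values and the excess of the refined
  energy over its harmonic minimum, split with the weight \<open>t\<close> between the two.\<close>

lemma midpoint_squares_le: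
  fixes a b c x y z t :: real
  assumes t: "t > 0"
  shows "x\<^sup>2 + y\<^sup>2 + z\<^sup>2 \<le> (1 + t) * (a\<^sup>2 + b\<^sup>2 + c\<^sup>2 - 8/25 * tri_energy a b c)
                            + (1 + t) / (2 * t) * (refined_energy a b c x y z - 3/5 * tri_energy a b c)"
proof -
  let ?h1 = "harm_mid a b c" and ?h2 = "harm_mid a c b" and ?h3 = "harm_mid b c a"
  let ?G = "(x - ?h1)\<^sup>2 + (y - ?h2)\<^sup>2 + (z - ?h3)\<^sup>2"
  have "x\<^sup>2 + y\<^sup>2 + z\<^sup>2 \<le> (1 + t) * (?h1\<^sup>2 + ?h2\<^sup>2 + ?h3\<^sup>2) + (1 + t) / t * ?G"
    using square_add_le[OF t, of ?h1 "x - ?h1"] square_add_le[OF t, of ?h2 "y - ?h2"]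
      square_add_le[OF t, of ?h3 "z - ?h3"]
    by (simp add: algebra_simps)
  also have "(1 + t) / t * ?G = (1 + t) / (2 * t) * (2 * ?G)"
    using t by (simp add: field_simps)
  also have "\<dots> \<le> (1 + t) / (2 * t) * (refined_energy a b c x y z - 3/5 * tri_energy a b c)"
    using refined_energy_ge[of a b c x y z] t by (intro mult_left_mono) auto
  finally show ?thesis
    by (simp add: sum_squares_harm_mid)
qed

definition lat_midpoints :: "int \<times> int \<Rightarrow> (int \<times> int) set" where
  "lat_midpoints v = {(2 * fst v + 1, 2 * snd v), (2 * fst v, 2 * snd v + 1), (2 * fst v + 1, 2 * snd v + 1)}"

lemma lat_G_Suc: "lat_G (Suc l) = double ` lat_G l \<union> (\<Union>v\<in>lat_offsets l. lat_midpoints v)"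
proof -
  have "lat_G (Suc l) = (\<Union>v\<in>lat_offsets l. \<Union>w\<in>lat_children v. lat_tri w)"
    unfolding lat_G_def lat_offsets_Suc by blast
  also have "\<dots> = (\<Union>v\<in>lat_offsets l. double ` lat_tri v \<union> lat_midpoints v)"
    by (rule SUP_cong[OF refl]) (auto simp: lat_children_def lat_tri_def double_def lat_midpoints_def)
  also have "\<dots> = double ` lat_G l \<union> (\<Union>v\<in>lat_offsets l. lat_midpoints v)"
    by (auto simp: lat_G_def)
  finally show ?thesis .
qed

lemma sum_lat_G_Suc:
  "(\<Sum>p\<in>lat_G (Suc l). F p) = (\<Sum>p\<in>lat_G l. F (double p)) +
     (\<Sum>v\<in>lat_offsets l. F (2 * fst v + 1, 2 * snd v) + F (2 * fst v, 2 * snd v + 1) + F (2 * fst v + 1, 2 * snd v + 1))"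
proof -
  let ?M = "\<Union>v\<in>lat_offsets l. lat_midpoints v"
  have disj: "double ` lat_G l \<inter> ?M = {}"
    by (auto simp: double_def lat_midpoints_def; presburger)
  have "(\<Sum>p\<in>lat_G (Suc l). F p) = (\<Sum>p\<in>double ` lat_G l. F p) + (\<Sum>p\<in>?M. F p)"
    unfolding lat_G_Suc
    by (rule sum.union_disjoint[OF _ _ disj]) (simp_all add: finite_lat_G finite_lat_offsets lat_midpoints_def)
  also have "(\<Sum>p\<in>double ` lat_G l. F p) = (\<Sum>p\<in>lat_G l. F (double p))"
    by (rule sum.reindex_cong[where l = double]) (auto simp: inj_on_def double_def prod_eq_iff)
  also have "(\<Sum>p\<in>?M. F p) = (\<Sum>v\<in>lat_offsets l. \<Sum>p\<in>lat_midpoints v. F p)"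
  proof (rule sum.UNION_disjoint)
    show "\<forall>v\<in>lat_offsets l. \<forall>w\<in>lat_offsets l. v \<noteq> w \<longrightarrow> lat_midpoints v \<inter> lat_midpoints w = {}"
      by (fastforce simp: lat_midpoints_def)
  qed (simp_all add: finite_lat_offsets lat_midpoints_def)
  finally show ?thesis
    by (simp add: lat_midpoints_def prod_eq_iff add.assoc)
qed

lemma energy_Suc:
  "energy (Suc l) f = (\<Sum>v\<in>lat_offsets l.
     refined_energy (f (double v)) (f (double (fst v + 1, snd v))) (f (double (fst v, snd v + 1)))
       (f (2 * fst v + 1, 2 * snd v)) (f (2 * fst v, 2 * snd v + 1)) (f (2 * fst v + 1, 2 * snd v + 1)))"
  unfolding energy_def sum_lat_offsets_Suc
  by (rule sum.cong[OF refl]) (simp add: refined_energy_def double_def add.assoc algebra_simps)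

lemma energy_double_le: "3/5 * energy l (f \<circ> double) \<le> energy (Suc l) f"
proof -
  have "3/5 * energy l (f \<circ> double) = (\<Sum>v\<in>lat_offsets l.
      3/5 * tri_energy (f (double v)) (f (double (fst v + 1, snd v))) (f (double (fst v, snd v + 1))))"
    by (simp add: energy_def sum_distrib_left)
  also have "\<dots> \<le> energy (Suc l) f"
    unfolding energy_Suc by (intro sum_mono refined_energy_ge_tri_energy)
  finally show ?thesis .
qed

definition tri_mass :: "nat \<Rightarrow> (int \<times> int \<Rightarrow> real) \<Rightarrow> real" where
  "tri_mass l g = (\<Sum>v\<in>lat_offsets l. (g v)\<^sup>2 + (g (fst v + 1, snd v))\<^sup>2 + (g (fst v, snd v + 1))\<^sup>2)"

text \<open>Every vertex lies in at most two triangles (\<open>card_triangles_at_vertex\<close>).\<close>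

lemma tri_mass_le: "tri_mass l g \<le> 2 * (\<Sum>p\<in>lat_G l. (g p)\<^sup>2)"
proof -
  have "tri_mass l g = (\<Sum>v\<in>lat_offsets l. \<Sum>p\<in>{p. p \<in> lat_G l \<and> p \<in> lat_tri v}. (g p)\<^sup>2)"
    unfolding tri_mass_def
  proof (rule sum.cong[OF refl])
    fix v assume "v \<in> lat_offsets l"
    then have "{p. p \<in> lat_G l \<and> p \<in> lat_tri v} = lat_tri v"
      using lat_tri_subset_lat_G by blast
    then show "(g v)\<^sup>2 + (g (fst v + 1, snd v))\<^sup>2 + (g (fst v, snd v + 1))\<^sup>2
        = (\<Sum>p\<in>{p. p \<in> lat_G l \<and> p \<in> lat_tri v}. (g p)\<^sup>2)"
      by (simp add: sum_lat_tri)
  qed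
  also have "\<dots> = (\<Sum>p\<in>lat_G l. real (card {v\<in>lat_offsets l. p \<in> lat_tri v}) * (g p)\<^sup>2)"
    by (subst sum.swap_restrict) (auto simp: finite_lat_offsets finite_lat_G)
  also have "\<dots> \<le> (\<Sum>p\<in>lat_G l. 2 * (g p)\<^sup>2)"
    using card_triangles_at_vertex by (intro sum_mono mult_right_mono) auto
  finally show ?thesis
    by (simp add: sum_distrib_left)
qed

section \<open>The Poincare inequality\<close>

definition has_poincare_const :: "nat \<Rightarrow> real \<Rightarrow> bool" where
  "has_poincare_const l c \<longleftrightarrow>
     (\<forall>g. (\<Sum>p\<in>lat_G l. g p) = 0 \<longrightarrow> c * (\<Sum>p\<in>lat_G l. (g p)\<^sup>2) \<le> energy l g)"

lemma lat_G_0: "lat_G 0 = lat_tri (0, 0)"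
  by (simp add: lat_G_def)

lemma sum_lat_G_1:
  "(\<Sum>p\<in>lat_G 1. h p) = h (0, 0) + h (2, 0) + h (0, 2) + h (1, 0) + h (0, 1) + h (1, 1)"
  using sum_lat_G_Suc[where F = h and l = 0] by (simp add: lat_G_0 sum_lat_tri double_def add.assoc)

lemma energy_1: "energy 1 g = refined_energy (g (0, 0)) (g (2, 0)) (g (0, 2)) (g (1, 0)) (g (0, 1)) (g (1, 1))"
  using energy_Suc[of 0 g] by (simp add: double_def)

lemma refined_energy_sos:
  "refined_energy a b c x y z - 3/2 * (a\<^sup>2 + b\<^sup>2 + c\<^sup>2 + x\<^sup>2 + y\<^sup>2 + z\<^sup>2) + 1/4 * (a + b + c + x + y + z)\<^sup>2 =
    3/4 * (a - x - y + b/3 + z/3 + c/3)\<^sup>2 + 2 * (x - 3/4 * y - 1/4 * b - 1/4 * z + 1/4 * c)\<^sup>2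
    + 7/8 * (y + b/7 - z - c/7)\<^sup>2 + 11/21 * (b - 35/22 * z + 13/22 * c)\<^sup>2 + 15/44 * (z - c)\<^sup>2"
  by (simp add: refined_energy_def tri_energy_def field_simps power2_eq_square)

lemma has_poincare_const_1: "has_poincare_const 1 (3/2)"
  unfolding has_poincare_const_def
proof (intro allI impI)
  fix g :: "int \<times> int \<Rightarrow> real"
  assume "(\<Sum>p\<in>lat_G 1. g p) = 0"
  then have "g (0, 0) + g (2, 0) + g (0, 2) + g (1, 0) + g (0, 1) + g (1, 1) = 0"
    by (simp only: sum_lat_G_1)
  with refined_energy_sos[of "g (0, 0)" "g (2, 0)" "g (0, 2)" "g (1, 0)" "g (0, 1)" "g (1, 1)"]
  have "0 \<le> refined_energy (g (0, 0)) (g (2, 0)) (g (0, 2)) (g (1, 0)) (g (0, 1)) (g (1, 1))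
      - 3/2 * ((g (0, 0))\<^sup>2 + (g (2, 0))\<^sup>2 + (g (0, 2))\<^sup>2 + (g (1, 0))\<^sup>2 + (g (0, 1))\<^sup>2 + (g (1, 1))\<^sup>2)"
    by simp
  then show "3/2 * (\<Sum>p\<in>lat_G 1. (g p)\<^sup>2) \<le> energy 1 g"
    unfolding sum_lat_G_1 energy_1 by simp
qed

text \<open>Pure arithmetic behind the inductive step; \<open>A\<close>, \<open>M\<close> are the masses on the coarse
  vertices and on the new midpoints, \<open>S\<close> the triangle mass, \<open>e\<close> and \<open>E\<close> the coarse and fine energies.\<close>

lemma poincare_step_arith:
  fixes lam A M S e E :: real
  assumes lam: "0 < lam" "lam \<le> 3/2"
    and M: "M \<le> (1 + lam/8) * (S - 8/25 * e) + (1 + lam/8) / (2 * (lam/8)) * (E - 3/5 * e)"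
    and S: "S \<le> 2 * A" and e: "lam * A \<le> e" and E: "3/5 * e \<le> E" and A: "0 \<le> A"
  shows "lam / 5 * (A + M) \<le> E"
proof -
  define r where "r = 3/5 + lam/5 * (1 + lam/8) * (8/25)"
  have "lam/5 * M \<le> lam/5 * ((1 + lam/8) * (S - 8/25 * e) + (1 + lam/8) / (2 * (lam/8)) * (E - 3/5 * e))"
    using M lam by (intro mult_left_mono) auto
  also have "\<dots> = lam/5 * (1 + lam/8) * S - lam/5 * (1 + lam/8) * (8/25) * e + (4/5 + lam/10) * (E - 3/5 * e)"
    using lam by (simp add: field_simps)
  finally have M': "lam/5 * M \<le> \<dots>" .
  have S': "lam/5 * (1 + lam/8) * S \<le> lam/5 * (1 + lam/8) * (2 * A)"
    using mult_left_mono[OF S, of "lam/5 * (1 + lam/8)"] lam by simp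
  have E': "(1/5 - lam/10) * (3/5 * e) \<le> (1/5 - lam/10) * E"
    using mult_left_mono[OF E, of "1/5 - lam/10"] lam by simp
  have e': "r * (lam * A) \<le> r * e"
    using lam by (intro mult_left_mono[OF e]) (simp add: r_def)
  have "r * lam - lam/5 * (3 + 2 * (lam/8)) = lam\<^sup>2 * (7/500 + lam/125)"
    by (simp add: r_def field_simps power2_eq_square)
  also have "\<dots> \<ge> 0"
    using lam by simp
  finally have "lam/5 * (3 + 2 * (lam/8)) \<le> r * lam"
    by simp
  from mult_right_mono[OF this A] have A': "lam/5 * (3 + 2 * (lam/8)) * A \<le> r * lam * A" .
  have "lam / 5 * (A + M) = lam/5 * A + lam/5 * M"
    by (simp add: algebra_simps)
  also have "\<dots> \<le> lam/5 * A + lam/5 * (1 + lam/8) * (2 * A)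
      - lam/5 * (1 + lam/8) * (8/25) * e + (4/5 + lam/10) * (E - 3/5 * e)"
    using M' S' by linarith
  also have "\<dots> = lam/5 * (3 + 2 * (lam/8)) * A - (r - 3/5) * e + (4/5 + lam/10) * E - (4/5 + lam/10) * (3/5) * e"
    by (simp add: r_def algebra_simps)
  also have "\<dots> \<le> r * (lam * A) - (r - 3/5) * e + (4/5 + lam/10) * E - (4/5 + lam/10) * (3/5) * e"
    using A' by simp
  also have "\<dots> \<le> E"
  proof -
    have "(1/5 - lam/10) * (3/5 * e) = 3/5 * e - (4/5 + lam/10) * (3/5) * e"
      "(1/5 - lam/10) * E = E - (4/5 + lam/10) * E"
      by (simp_all add: algebra_simps)
    with E' e' show ?thesis
      by (simp add: algebra_simps)
  qed
  finally show ?thesis .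
qed

lemma midpoint_mass_le:
  assumes t: "t > 0"
  shows "(\<Sum>v\<in>lat_offsets l. (f (2 * fst v + 1, 2 * snd v))\<^sup>2 + (f (2 * fst v, 2 * snd v + 1))\<^sup>2
                               + (f (2 * fst v + 1, 2 * snd v + 1))\<^sup>2)
    \<le> (1 + t) * (tri_mass l (f \<circ> double) - 8/25 * energy l (f \<circ> double))
       + (1 + t) / (2 * t) * (energy (Suc l) f - 3/5 * energy l (f \<circ> double))"
proof -
  let ?m = "\<lambda>v. (f (double v))\<^sup>2 + (f (double (fst v + 1, snd v)))\<^sup>2 + (f (double (fst v, snd v + 1)))\<^sup>2"
  let ?e = "\<lambda>v. tri_energy (f (double v)) (f (double (fst v + 1, snd v))) (f (double (fst v, snd v + 1)))"
  let ?E = "\<lambda>v. refined_energy (f (double v)) (f (double (fst v + 1, snd v))) (f (double (fst v, snd v + 1)))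
       (f (2 * fst v + 1, 2 * snd v)) (f (2 * fst v, 2 * snd v + 1)) (f (2 * fst v + 1, 2 * snd v + 1))"
  have "(\<Sum>v\<in>lat_offsets l. (f (2 * fst v + 1, 2 * snd v))\<^sup>2 + (f (2 * fst v, 2 * snd v + 1))\<^sup>2
                               + (f (2 * fst v + 1, 2 * snd v + 1))\<^sup>2)
      \<le> (\<Sum>v\<in>lat_offsets l. (1 + t) * (?m v - 8/25 * ?e v) + (1 + t) / (2 * t) * (?E v - 3/5 * ?e v))"
    by (intro sum_mono midpoint_squares_le t)
  also have "\<dots> = (1 + t) * (\<Sum>v\<in>lat_offsets l. ?m v - 8/25 * ?e v)
      + (1 + t) / (2 * t) * (\<Sum>v\<in>lat_offsets l. ?E v - 3/5 * ?e v)"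
    by (simp only: sum.distrib sum_distrib_left)
  also have "\<dots> = (1 + t) * (tri_mass l (f \<circ> double) - 8/25 * energy l (f \<circ> double))
       + (1 + t) / (2 * t) * (energy (Suc l) f - 3/5 * energy l (f \<circ> double))"
    unfolding energy_Suc by (simp add: tri_mass_def energy_def sum_subtractf sum_distrib_left)
  finally show ?thesis .
qed

lemma poincare_step_coarse_mean_zero:
  assumes P: "has_poincare_const l lam" and lam: "0 < lam" "lam \<le> 3/2"
    and mean: "(\<Sum>p\<in>lat_G l. f (double p)) = 0"
  shows "lam / 5 * (\<Sum>p\<in>lat_G (Suc l). (f p)\<^sup>2) \<le> energy (Suc l) f"
proof -
  define A where "A = (\<Sum>p\<in>lat_G l. (f (double p))\<^sup>2)"
  define M where "M = (\<Sum>v\<in>lat_offsets l. (f (2 * fst v + 1, 2 * snd v))\<^sup>2 + (f (2 * fst v, 2 * snd v + 1))\<^sup>2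
                               + (f (2 * fst v + 1, 2 * snd v + 1))\<^sup>2)"
  have "(\<Sum>p\<in>lat_G (Suc l). (f p)\<^sup>2) = A + M"
    by (simp add: sum_lat_G_Suc A_def M_def)
  moreover have "lam / 5 * (A + M) \<le> energy (Suc l) f"
  proof (rule poincare_step_arith[OF lam])
    show "M \<le> (1 + lam/8) * (tri_mass l (f \<circ> double) - 8/25 * energy l (f \<circ> double))
        + (1 + lam/8) / (2 * (lam/8)) * (energy (Suc l) f - 3/5 * energy l (f \<circ> double))"
      unfolding M_def using lam by (intro midpoint_mass_le) simp
    show "tri_mass l (f \<circ> double) \<le> 2 * A"
      using tri_mass_le[of l "f \<circ> double"] by (simp add: A_def)
    show "lam * A \<le> energy l (f \<circ> double)"
      using spec[OF P[unfolded has_poincare_const_def], of "f \<circ> double"] mean by (simp add: A_def)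
    show "3/5 * energy l (f \<circ> double) \<le> energy (Suc l) f"
      by (rule energy_double_le)
    show "0 \<le> A"
      by (simp add: A_def sum_nonneg)
  qed
  ultimately show ?thesis
    by simp
qed

lemma sum_squares_le_sum_squares_diff_const:
  fixes f :: "'a \<Rightarrow> real"
  assumes "(\<Sum>p\<in>X. f p) = 0"
  shows "(\<Sum>p\<in>X. (f p)\<^sup>2) \<le> (\<Sum>p\<in>X. (f p - c)\<^sup>2)"
proof -
  have "(\<Sum>p\<in>X. (f p - c)\<^sup>2) = (\<Sum>p\<in>X. (f p)\<^sup>2) - 2 * c * (\<Sum>p\<in>X. f p) + real (card X) * c\<^sup>2"
    by (simp add: power2_diff sum.distrib sum_subtractf sum_distrib_left sum_distrib_right algebra_simps)
  with assms show ?thesis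
    by simp
qed

text \<open>Shift \<open>f\<close> by the mean of its coarse restriction: the energy does not change and, \<open>f\<close>
  having mean zero, the sum of squares can only grow.\<close>

lemma has_poincare_const_Suc:
  assumes P: "has_poincare_const l lam" and lam: "0 < lam" "lam \<le> 3/2"
  shows "has_poincare_const (Suc l) (lam / 5)"
  unfolding has_poincare_const_def
proof (intro allI impI)
  fix f :: "int \<times> int \<Rightarrow> real"
  assume mean: "(\<Sum>p\<in>lat_G (Suc l). f p) = 0"
  define c where "c = (\<Sum>p\<in>lat_G l. f (double p)) / card (lat_G l)"
  have "card (lat_G l) \<noteq> 0"
    using finite_lat_G lat_G_nonempty by simp
  then have "(\<Sum>p\<in>lat_G l. f (double p) - c) = 0"
    by (simp add: sum_subtractf c_def)
  from poincare_step_coarse_mean_zero[OF P lam this]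
  have "lam / 5 * (\<Sum>p\<in>lat_G (Suc l). (f p - c)\<^sup>2) \<le> energy (Suc l) f"
    by (simp add: energy_diff_const)
  moreover have "lam / 5 * (\<Sum>p\<in>lat_G (Suc l). (f p)\<^sup>2) \<le> lam / 5 * (\<Sum>p\<in>lat_G (Suc l). (f p - c)\<^sup>2)"
    using sum_squares_le_sum_squares_diff_const[OF mean] lam by (intro mult_left_mono) auto
  ultimately show "lam / 5 * (\<Sum>p\<in>lat_G (Suc l). (f p)\<^sup>2) \<le> energy (Suc l) f"
    by linarith
qed

lemma poincare_inequality: "l \<ge> 1 \<Longrightarrow> has_poincare_const l ((15/2) / 5 ^ l)"
proof (induction l rule: nat_induct_at_least)
  case base
  show ?case using has_poincare_const_1 by simp
next
  case (Suc n)
  have "(15/2) / 5 ^ n \<le> (15/2 :: real) / 5 ^ 1"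
    using Suc.hyps by (intro divide_left_mono power_increasing) auto
  with Suc.IH have "has_poincare_const (Suc n) ((15/2) / 5 ^ n / 5)"
    by (intro has_poincare_const_Suc) auto
  then show ?case
    by (simp add: field_simps)
qed

fun harmonic_test :: "nat \<Rightarrow> int \<times> int \<Rightarrow> real" where
  "harmonic_test 0 = (\<lambda>p. if p = (0, 0) then 1 else if p = (1, 0) then -1 else 0)"
| "harmonic_test (Suc l) = (\<lambda>p. let i = fst p; j = snd p; a = i div 2; b = j div 2; h = harmonic_test l in
     if even i \<and> even j then h (a, b)
     else if odd i \<and> even j then harm_mid (h (a, b)) (h (a + 1, b)) (h (a, b + 1))
     else if even i \<and> odd j then harm_mid (h (a, b)) (h (a, b + 1)) (h (a + 1, b))
     else harm_mid (h (a + 1, b)) (h (a, b + 1)) (h (a, b)))"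

lemma harmonic_test_Suc:
  fixes l :: nat and v :: "int \<times> int"
  defines "h \<equiv> harmonic_test l"
  shows "harmonic_test (Suc l) (double v) = h v"
    and "harmonic_test (Suc l) (2 * fst v + 1, 2 * snd v) = harm_mid (h v) (h (fst v + 1, snd v)) (h (fst v, snd v + 1))"
    and "harmonic_test (Suc l) (2 * fst v, 2 * snd v + 1) = harm_mid (h v) (h (fst v, snd v + 1)) (h (fst v + 1, snd v))"
    and "harmonic_test (Suc l) (2 * fst v + 1, 2 * snd v + 1) = harm_mid (h (fst v + 1, snd v)) (h (fst v, snd v + 1)) (h v)"
  by (simp_all add: h_def double_def Let_def)

lemma harmonic_test_Suc_double_shift:
  "harmonic_test (Suc l) (double (fst v + 1, snd v)) = harmonic_test l (fst v + 1, snd v)"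
  "harmonic_test (Suc l) (double (fst v, snd v + 1)) = harmonic_test l (fst v, snd v + 1)"
  by (simp_all only: harmonic_test_Suc(1))

lemma energy_harmonic_test: "energy l (harmonic_test l) = 6 * (3/5) ^ l"
proof (induction l)
  case 0
  show ?case by (simp add: energy_def tri_energy_def)
next
  case (Suc l)
  have "energy (Suc l) (harmonic_test (Suc l))
      = (\<Sum>v\<in>lat_offsets l. 3/5 * tri_energy (harmonic_test l v)
           (harmonic_test l (fst v + 1, snd v)) (harmonic_test l (fst v, snd v + 1)))"
    unfolding energy_Suc harmonic_test_Suc harmonic_test_Suc_double_shift
    by (simp only: refined_energy_harmonic)
  also have "\<dots> = 3/5 * energy l (harmonic_test l)"
    by (simp add: energy_def sum_distrib_left)
  finally show ?case
    using Suc by simp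
qed

lemma sum_lat_offsets_Suc_tri:
  "(\<Sum>w\<in>lat_offsets (Suc l). \<Psi> (h w) (h (fst w + 1, snd w)) (h (fst w, snd w + 1))) =
   (\<Sum>v\<in>lat_offsets l. \<Psi> (h (double v)) (h (2 * fst v + 1, 2 * snd v)) (h (2 * fst v, 2 * snd v + 1))
     + \<Psi> (h (2 * fst v + 1, 2 * snd v)) (h (double (fst v + 1, snd v))) (h (2 * fst v + 1, 2 * snd v + 1))
     + \<Psi> (h (2 * fst v, 2 * snd v + 1)) (h (2 * fst v + 1, 2 * snd v + 1)) (h (double (fst v, snd v + 1))))"
  unfolding sum_lat_offsets_Suc
  by (rule sum.cong[OF refl]) (simp add: double_def add.assoc algebra_simps)

lemma harmonic_test_tri_total:
  "(\<Sum>v\<in>lat_offsets l. harmonic_test l v + harmonic_test l (fst v + 1, snd v) + harmonic_test l (fst v, snd v + 1)) = 0"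
proof (induction l)
  case 0
  show ?case by simp
next
  case (Suc l)
  have "(\<Sum>v\<in>lat_offsets (Suc l). harmonic_test (Suc l) v + harmonic_test (Suc l) (fst v + 1, snd v)
          + harmonic_test (Suc l) (fst v, snd v + 1))
      = (\<Sum>v\<in>lat_offsets l. 3 * (harmonic_test l v + harmonic_test l (fst v + 1, snd v)
          + harmonic_test l (fst v, snd v + 1)))"
    unfolding sum_lat_offsets_Suc_tri[where \<Psi> = "\<lambda>a b c. a + b + c"]
    unfolding harmonic_test_Suc harmonic_test_Suc_double_shift
    by (rule sum.cong[OF refl]) (simp add: harm_mid_def field_simps)
  also have "\<dots> = 0"
    by (simp only: sum_distrib_left[symmetric] Suc.IH mult_zero_right)
  finally show ?case .
qed

lemma tri_mass_harmonic_test: "tri_mass l (harmonic_test l) = 3 ^ l * (2/5 + 8/5 / 5 ^ l)"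
proof (induction l)
  case 0
  show ?case by (simp add: tri_mass_def)
next
  case (Suc l)
  have "tri_mass (Suc l) (harmonic_test (Suc l))
      = (\<Sum>v\<in>lat_offsets l. 3 * ((harmonic_test l v)\<^sup>2 + (harmonic_test l (fst v + 1, snd v))\<^sup>2
          + (harmonic_test l (fst v, snd v + 1))\<^sup>2)
        - 16/25 * tri_energy (harmonic_test l v) (harmonic_test l (fst v + 1, snd v)) (harmonic_test l (fst v, snd v + 1)))"
    unfolding tri_mass_def sum_lat_offsets_Suc_tri[where \<Psi> = "\<lambda>a b c. a\<^sup>2 + b\<^sup>2 + c\<^sup>2"]
    unfolding harmonic_test_Suc harmonic_test_Suc_double_shift
    by (rule sum.cong[OF refl]) (simp add: harm_mid_def tri_energy_def field_simps power2_eq_square)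
  also have "\<dots> = 3 * tri_mass l (harmonic_test l) - 16/25 * energy l (harmonic_test l)"
    by (simp add: tri_mass_def energy_def sum_subtractf sum_distrib_left)
  also have "\<dots> = 3 ^ Suc l * (2/5 + 8/5 / 5 ^ Suc l)"
    by (simp add: Suc energy_harmonic_test field_simps power_divide)
  finally show ?case .
qed

text \<open>Since the test function has zero total over the triangles, no shift reduces its triangle
  mass, which is at least \<open>2/5 \<cdot> 3^l\<close>; every vertex lies in at most two triangles.\<close>

lemma sum_squares_harmonic_test_diff_ge: "3 ^ l / 5 \<le> (\<Sum>p\<in>lat_G l. (harmonic_test l p - c)\<^sup>2)"
proof -
  let ?h = "harmonic_test l"
  have "tri_mass l (\<lambda>p. ?h p - c)
      = tri_mass l ?h - 2 * c * (\<Sum>v\<in>lat_offsets l. ?h v + ?h (fst v + 1, snd v) + ?h (fst v, snd v + 1))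
        + 3 * c\<^sup>2 * real (card (lat_offsets l))"
    by (simp add: tri_mass_def power2_diff sum.distrib sum_subtractf sum_distrib_left algebra_simps)
  then have "tri_mass l ?h \<le> tri_mass l (\<lambda>p. ?h p - c)"
    by (simp add: harmonic_test_tri_total)
  also have "\<dots> \<le> 2 * (\<Sum>p\<in>lat_G l. (?h p - c)\<^sup>2)"
    by (rule tri_mass_le)
  finally have "tri_mass l ?h \<le> 2 * (\<Sum>p\<in>lat_G l. (?h p - c)\<^sup>2)" .
  moreover have "2/5 * 3 ^ l \<le> tri_mass l ?h"
    by (simp add: tri_mass_harmonic_test distrib_left)
  ultimately show ?thesis
    by linarith
qed

section \<open>Eigenvalues and the Rayleigh quotient\<close>

lemma sum_squares_pos_iff:
  fixes g :: "int \<times> int \<Rightarrow> real"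
  shows "0 < (\<Sum>p\<in>lat_G l. (g p)\<^sup>2) \<longleftrightarrow> (\<exists>p\<in>lat_G l. g p \<noteq> 0)"
proof -
  have "(\<Sum>p\<in>lat_G l. (g p)\<^sup>2) = 0 \<longleftrightarrow> (\<forall>p\<in>lat_G l. g p = 0)"
    using sum_nonneg_eq_0_iff[OF finite_lat_G, where f = "\<lambda>p. (g p)\<^sup>2"] by simp
  moreover have "0 \<le> (\<Sum>p\<in>lat_G l. (g p)\<^sup>2)"
    by (simp add: sum_nonneg)
  ultimately show ?thesis
    by (auto simp: less_le)
qed

lemma lat_eigenvalue_ge:
  assumes mu: "mu \<in> lat_eigenvalues l" "mu \<noteq> 0" and P: "has_poincare_const l c"
  shows "c \<le> mu"
proof -
  obtain g where nz: "\<exists>p\<in>lat_G l. g p \<noteq> 0" and eig: "\<forall>p\<in>lat_G l. lat_laplacian l g p = mu * g p"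
    using mu by (auto simp: lat_eigenvalues_def)
  have "mu * (\<Sum>p\<in>lat_G l. g p) = 0"
    using eig sum_lat_laplacian[of l g] by (simp add: sum_distrib_left)
  with mu have "(\<Sum>p\<in>lat_G l. g p) = 0"
    by simp
  with P have "c * (\<Sum>p\<in>lat_G l. (g p)\<^sup>2) \<le> energy l g"
    by (simp add: has_poincare_const_def)
  also have "energy l g = mu * (\<Sum>p\<in>lat_G l. (g p)\<^sup>2)"
    using eig by (simp add: energy_eq_sum_lat_laplacian sum_distrib_left power2_eq_square mult_ac)
  finally show ?thesis
    using nz by (simp add: sum_squares_pos_iff[symmetric])
qed

lemma linear_coeff_eq_0_if_quadratic_nonneg:
  fixes a b :: real
  assumes "\<And>s. 0 \<le> s * a + s\<^sup>2 * b"
  shows "a = 0"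
proof (rule ccontr)
  assume a: "a \<noteq> 0"
  define k where "k = \<bar>b\<bar> + 1"
  define s where "s = - a / (2 * k)"
  have k: "k \<ge> 1"
    by (simp add: k_def)
  have "s\<^sup>2 * b \<le> s\<^sup>2 * k"
    by (intro mult_left_mono) (auto simp: k_def)
  also have "s\<^sup>2 * k = a\<^sup>2 / (4 * k)"
    using k by (simp add: s_def power2_eq_square field_simps)
  finally have "s\<^sup>2 * b \<le> a\<^sup>2 / (4 * k)" .
  moreover have "s * a = - (a\<^sup>2 / (2 * k))" "- (a\<^sup>2 / (2 * k)) + a\<^sup>2 / (4 * k) = - (a\<^sup>2 / (4 * k))"
    using k by (simp_all add: s_def power2_eq_square field_simps)
  moreover have "a\<^sup>2 / (4 * k) > 0"
    using a k by simp
  ultimately show False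
    using assms[of s] by linarith
qed

definition supported_on :: "nat \<Rightarrow> (int \<times> int \<Rightarrow> real) \<Rightarrow> bool" where
  "supported_on l g \<longleftrightarrow> (\<forall>p. p \<notin> lat_G l \<longrightarrow> g p = 0)"

text \<open>The unit sphere of mean-zero functions on \<open>lat_G l\<close>, written as a closed subset of a
  product of compact intervals so that its compactness is immediate.\<close>

definition mean_zero_sphere :: "nat \<Rightarrow> (int \<times> int \<Rightarrow> real) set" where
  "mean_zero_sphere l = PiE UNIV (\<lambda>p. if p \<in> lat_G l then {-1..1} else {0})
     \<inter> {g. (\<Sum>p\<in>lat_G l. g p) = 0} \<inter> {g. (\<Sum>p\<in>lat_G l. (g p)\<^sup>2) = 1}"

lemma compact_mean_zero_sphere: "compact (mean_zero_sphere l)"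
proof -
  have "compactin (product_topology (\<lambda>_. euclidean) UNIV)
      (PiE UNIV (\<lambda>p. if p \<in> lat_G l then {-1..1::real} else {0}))"
    by (subst compactin_PiE) auto
  then have "compact (PiE UNIV (\<lambda>p. if p \<in> lat_G l then {-1..1::real} else {0}))"
    by (simp add: euclidean_product_topology)
  moreover have "closed {g :: int \<times> int \<Rightarrow> real. (\<Sum>p\<in>lat_G l. g p) = 0}"
    "closed {g :: int \<times> int \<Rightarrow> real. (\<Sum>p\<in>lat_G l. (g p)\<^sup>2) = 1}"
    by (intro closed_Collect_eq continuous_on_sum continuous_intros; simp)+
  ultimately show ?thesis
    unfolding mean_zero_sphere_def by (intro compact_Int_closed)
qed

lemma continuous_on_energy: "continuous_on S (energy l)"
proof -
  have "energy l = (\<lambda>g. \<Sum>v\<in>lat_offsets l. tri_energy (g v) (g (fst v + 1, snd v)) (g (fst v, snd v + 1)))"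
    by (simp add: energy_def fun_eq_iff)
  moreover have "continuous_on S (\<lambda>g :: int \<times> int \<Rightarrow> real. g i)" for i
    by (rule continuous_on_subset[OF continuous_on_product_coordinates]) auto
  ultimately show ?thesis
    unfolding tri_energy_def by (simp only:) (intro continuous_on_sum continuous_intros)
qed

lemma normalized_mem_mean_zero_sphere:
  assumes "supported_on l g" "(\<Sum>p\<in>lat_G l. g p) = 0" and pos: "(\<Sum>p\<in>lat_G l. (g p)\<^sup>2) > 0"
  shows "(\<lambda>p. g p / sqrt (\<Sum>q\<in>lat_G l. (g q)\<^sup>2)) \<in> mean_zero_sphere l"
proof -
  define Q where "Q = (\<Sum>q\<in>lat_G l. (g q)\<^sup>2)"
  have sq: "(sqrt Q)\<^sup>2 = Q"
    using pos by (simp add: Q_def)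
  have "(g p)\<^sup>2 \<le> Q" if "p \<in> lat_G l" for p
    unfolding Q_def using that by (intro member_le_sum) (auto simp: finite_lat_G)
  then have "(g p / sqrt Q)\<^sup>2 \<le> 1" if "p \<in> lat_G l" for p
    using that pos by (simp add: power_divide sq Q_def)
  then have "g p / sqrt Q \<in> {-1..1}" if "p \<in> lat_G l" for p
    using that abs_square_le_1 by (metis abs_le_D1 abs_le_D2 atLeastAtMost_iff minus_le_iff)
  then have "(\<lambda>p. g p / sqrt Q) \<in> PiE UNIV (\<lambda>p. if p \<in> lat_G l then {-1..1} else {0})"
    using assms(1) by (auto simp: PiE_iff supported_on_def)
  moreover have "(\<Sum>p\<in>lat_G l. g p / sqrt Q) = 0" "(\<Sum>p\<in>lat_G l. (g p / sqrt Q)\<^sup>2) = 1"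
    using assms(2) pos by (simp_all add: power_divide sq sum_divide_distrib[symmetric] Q_def)
  ultimately show ?thesis
    by (simp add: mean_zero_sphere_def Q_def)
qed

lemma energy_minimizer_exists:
  assumes "supported_on l h" "(\<Sum>p\<in>lat_G l. h p) = 0" "(\<Sum>p\<in>lat_G l. (h p)\<^sup>2) > 0"
  obtains g0 where "supported_on l g0" "(\<Sum>p\<in>lat_G l. g0 p) = 0" "(\<Sum>p\<in>lat_G l. (g0 p)\<^sup>2) = 1"
    "\<And>g. supported_on l g \<Longrightarrow> (\<Sum>p\<in>lat_G l. g p) = 0
           \<Longrightarrow> energy l g0 * (\<Sum>p\<in>lat_G l. (g p)\<^sup>2) \<le> energy l g"
proof -
  have "mean_zero_sphere l \<noteq> {}"
    using normalized_mem_mean_zero_sphere[OF assms] by blast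
  then obtain g0 where g0: "g0 \<in> mean_zero_sphere l" and min: "\<forall>g\<in>mean_zero_sphere l. energy l g0 \<le> energy l g"
    using continuous_attains_inf[OF compact_mean_zero_sphere _ continuous_on_energy] by blast
  have "energy l g0 * (\<Sum>p\<in>lat_G l. (g p)\<^sup>2) \<le> energy l g"
    if g: "supported_on l g" "(\<Sum>p\<in>lat_G l. g p) = 0" for g
  proof (cases "(\<Sum>p\<in>lat_G l. (g p)\<^sup>2) = 0")
    case True
    then show ?thesis
      by (simp add: energy_nonneg)
  next
    case False
    define Q where "Q = (\<Sum>p\<in>lat_G l. (g p)\<^sup>2)"
    have Q: "Q > 0"
      using False sum_nonneg[of "lat_G l" "\<lambda>p. (g p)\<^sup>2"] by (simp add: Q_def)
    have "energy l g0 \<le> energy l (\<lambda>p. (1 / sqrt Q) * g p)"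
      using min normalized_mem_mean_zero_sphere[OF g] Q by (simp add: Q_def)
    also have "\<dots> = energy l g / Q"
      using Q by (simp only: energy_scale) (simp add: power_divide)
    finally show ?thesis
      using Q by (simp add: Q_def field_simps)
  qed
  moreover have "supported_on l g0"
    using g0 by (auto simp: mean_zero_sphere_def supported_on_def PiE_iff split: if_splits)
  ultimately show thesis
    using that g0 by (simp add: mean_zero_sphere_def)
qed

text \<open>The Euler--Lagrange equation of the constrained minimum: the quadratic
  \<open>s \<mapsto> energy (g0 + s g) - m \<cdot> \<Sum> (g0 + s g)\<^sup>2\<close> is non-negative and vanishes at \<open>s = 0\<close>.\<close>

lemma energy_form_minimizer:
  assumes g0: "supported_on l g0" "(\<Sum>p\<in>lat_G l. g0 p) = 0" "(\<Sum>p\<in>lat_G l. (g0 p)\<^sup>2) = 1"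
    and min: "\<And>g. supported_on l g \<Longrightarrow> (\<Sum>p\<in>lat_G l. g p) = 0
           \<Longrightarrow> energy l g0 * (\<Sum>p\<in>lat_G l. (g p)\<^sup>2) \<le> energy l g"
    and g: "supported_on l g" "(\<Sum>p\<in>lat_G l. g p) = 0"
  shows "energy_form l g0 g = energy l g0 * (\<Sum>p\<in>lat_G l. g0 p * g p)"
proof -
  define m where "m = energy l g0"
  define X where "X = (\<Sum>p\<in>lat_G l. g0 p * g p)"
  define Y where "Y = (\<Sum>p\<in>lat_G l. (g p)\<^sup>2)"
  have "0 \<le> s * (2 * (energy_form l g0 g - m * X)) + s\<^sup>2 * (energy l g - m * Y)" for s
  proof -
    have "supported_on l (\<lambda>p. g0 p + s * g p)" "(\<Sum>p\<in>lat_G l. g0 p + s * g p) = 0"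
      using g0 g by (simp_all add: supported_on_def sum.distrib sum_distrib_left[symmetric])
    from min[OF this]
    have "m * (\<Sum>p\<in>lat_G l. (g0 p + s * g p)\<^sup>2) \<le> m + 2 * s * energy_form l g0 g + s\<^sup>2 * energy l g"
      by (simp add: energy_add_scaled m_def)
    moreover have "(\<Sum>p\<in>lat_G l. (g0 p + s * g p)\<^sup>2) = 1 + 2 * s * X + s\<^sup>2 * Y"
      using g0 by (simp add: X_def Y_def power2_sum sum.distrib sum_distrib_left power_mult_distrib algebra_simps)
    ultimately show ?thesis
      by (simp add: algebra_simps)
  qed
  then have "2 * (energy_form l g0 g - m * X) = 0"
    by (rule linear_coeff_eq_0_if_quadratic_nonneg)
  then show ?thesis
    by (simp add: m_def X_def)
qed

lemma sum_indicator_mult: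
  "x \<in> lat_G l \<Longrightarrow> (\<Sum>p\<in>lat_G l. (if p = x then 1 else 0) * F p) = (F x :: real)"
  by (simp add: if_distrib[of "\<lambda>a. a * _"] finite_lat_G cong: if_cong)

text \<open>Testing the Euler--Lagrange equation with \<open>\<delta>\<^sub>x - \<delta>\<^sub>y\<close> shows that
  \<open>lat_laplacian l g0 - m g0\<close> is constant on \<open>lat_G l\<close>; its sum vanishes, so it is zero.\<close>

lemma energy_minimizer_eigenfunction:
  assumes g0: "supported_on l g0" "(\<Sum>p\<in>lat_G l. g0 p) = 0" "(\<Sum>p\<in>lat_G l. (g0 p)\<^sup>2) = 1"
    and min: "\<And>g. supported_on l g \<Longrightarrow> (\<Sum>p\<in>lat_G l. g p) = 0
           \<Longrightarrow> energy l g0 * (\<Sum>p\<in>lat_G l. (g p)\<^sup>2) \<le> energy l g"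
  shows "energy l g0 \<in> lat_eigenvalues l"
proof -
  define m where "m = energy l g0"
  define r where "r = (\<lambda>p. lat_laplacian l g0 p - m * g0 p)"
  have r_eq: "r x = r y" if x: "x \<in> lat_G l" and y: "y \<in> lat_G l" for x y
  proof -
    define \<delta> where "\<delta> = (\<lambda>p. (if p = x then 1 else 0) - (if p = y then 1 else (0::real)))"
    have "supported_on l \<delta>" "(\<Sum>p\<in>lat_G l. \<delta> p) = 0"
      using x y sum_indicator_mult[OF x, of "\<lambda>_. 1"] sum_indicator_mult[OF y, of "\<lambda>_. 1"]
      by (auto simp: supported_on_def \<delta>_def sum_subtractf)
    from energy_form_minimizer[OF g0 min this]
    have "(\<Sum>p\<in>lat_G l. \<delta> p * lat_laplacian l g0 p) = m * (\<Sum>p\<in>lat_G l. \<delta> p * g0 p)"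
      by (simp add: sum_mult_lat_laplacian m_def mult.commute)
    then show ?thesis
      using sum_indicator_mult[OF x] sum_indicator_mult[OF y]
      by (simp add: \<delta>_def r_def left_diff_distrib sum_subtractf algebra_simps)
  qed
  have "r x = 0" if x: "x \<in> lat_G l" for x
  proof -
    have "(\<Sum>p\<in>lat_G l. r p) = 0"
      using g0 by (simp add: r_def sum_subtractf sum_lat_laplacian sum_distrib_left[symmetric])
    moreover have "(\<Sum>p\<in>lat_G l. r p) = card (lat_G l) * r x"
      using r_eq[OF _ x] by simp
    moreover have "card (lat_G l) \<noteq> 0"
      using finite_lat_G lat_G_nonempty by simp
    ultimately show ?thesis
      by simp
  qed
  moreover have "\<exists>p\<in>lat_G l. g0 p \<noteq> 0"
    using g0(3) by (auto simp: sum_squares_pos_iff[symmetric])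
  ultimately show ?thesis
    unfolding lat_eigenvalues_def by (auto simp: r_def m_def)
qed

section \<open>Finiteness of the spectrum\<close>

text \<open>Pointwise scaling is given a name so that the simplification rules of the interpretation
  below do not fire on arbitrary \<open>\<lambda>\<close>-terms.\<close>

definition scale_fun :: "real \<Rightarrow> (int \<times> int \<Rightarrow> real) \<Rightarrow> int \<times> int \<Rightarrow> real" where
  "scale_fun c f = (\<lambda>p. c * f p)"

interpretation fun_vs: vector_space scale_fun
  by unfold_locales (auto simp: scale_fun_def fun_eq_iff algebra_simps)

lemma sum_fun_apply: "(\<Sum>a\<in>A. f a) x = (\<Sum>a\<in>A. f a x)"
  by (induction A rule: infinite_finite_induct) auto

definition eigenfunction :: "nat \<Rightarrow> real \<Rightarrow> int \<times> int \<Rightarrow> real" where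
  "eigenfunction l mu p = (if p \<in> lat_G l
     then (SOME g. (\<exists>p\<in>lat_G l. g p \<noteq> 0) \<and> (\<forall>p\<in>lat_G l. lat_laplacian l g p = mu * g p)) p else 0)"

lemma lat_laplacian_cong:
  "p \<in> lat_G l \<Longrightarrow> (\<And>q. q \<in> lat_G l \<Longrightarrow> g q = g' q) \<Longrightarrow> lat_laplacian l g p = lat_laplacian l g' p"
  unfolding lat_laplacian_def by (rule sum.cong) auto

lemma eigenfunction:
  assumes "mu \<in> lat_eigenvalues l"
  shows "supported_on l (eigenfunction l mu)" and "\<exists>p\<in>lat_G l. eigenfunction l mu p \<noteq> 0"
    and "\<forall>p\<in>lat_G l. lat_laplacian l (eigenfunction l mu) p = mu * eigenfunction l mu p"
proof -
  define g where "g = (SOME g. (\<exists>p\<in>lat_G l. g p \<noteq> 0) \<and> (\<forall>p\<in>lat_G l. lat_laplacian l g p = mu * g p))"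
  have "\<exists>g. (\<exists>p\<in>lat_G l. g p \<noteq> 0) \<and> (\<forall>p\<in>lat_G l. lat_laplacian l g p = mu * g p)"
    using assms by (simp add: lat_eigenvalues_def)
  then have "(\<exists>p\<in>lat_G l. g p \<noteq> 0) \<and> (\<forall>p\<in>lat_G l. lat_laplacian l g p = mu * g p)"
    unfolding g_def by (rule someI_ex)
  then have nz: "\<exists>p\<in>lat_G l. g p \<noteq> 0" and eig: "\<forall>p\<in>lat_G l. lat_laplacian l g p = mu * g p"
    by blast+
  have ef: "eigenfunction l mu p = (if p \<in> lat_G l then g p else 0)" for p
    by (simp add: eigenfunction_def g_def)
  show "supported_on l (eigenfunction l mu)"
    by (simp add: supported_on_def ef)
  show "\<exists>p\<in>lat_G l. eigenfunction l mu p \<noteq> 0"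
    using nz by (auto simp: ef)
  show "\<forall>p\<in>lat_G l. lat_laplacian l (eigenfunction l mu) p = mu * eigenfunction l mu p"
  proof
    fix p assume p: "p \<in> lat_G l"
    then have "lat_laplacian l (eigenfunction l mu) p = lat_laplacian l g p"
      by (intro lat_laplacian_cong) (simp_all add: ef)
    with p eig show "lat_laplacian l (eigenfunction l mu) p = mu * eigenfunction l mu p"
      by (simp add: ef)
  qed
qed

lemma eigenfunction_orthogonal:
  assumes mu: "mu \<in> lat_eigenvalues l" and nu: "nu \<in> lat_eigenvalues l" and "mu \<noteq> nu"
  shows "(\<Sum>p\<in>lat_G l. eigenfunction l mu p * eigenfunction l nu p) = 0"
proof -
  let ?f = "eigenfunction l mu" and ?g = "eigenfunction l nu"
  have "mu * (\<Sum>p\<in>lat_G l. ?f p * ?g p) = energy_form l ?f ?g"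
    using eigenfunction(3)[OF mu] by (simp add: sum_mult_lat_laplacian[symmetric] sum_distrib_left mult_ac)
  also have "\<dots> = energy_form l ?g ?f"
    by (rule energy_form_commute)
  also have "\<dots> = nu * (\<Sum>p\<in>lat_G l. ?f p * ?g p)"
    using eigenfunction(3)[OF nu] by (simp add: sum_mult_lat_laplacian[symmetric] sum_distrib_left mult_ac)
  finally show ?thesis
    using \<open>mu \<noteq> nu\<close> by simp
qed

lemma eigenfunction_norm_pos:
  "mu \<in> lat_eigenvalues l \<Longrightarrow> 0 < (\<Sum>p\<in>lat_G l. eigenfunction l mu p * eigenfunction l mu p)"
  using eigenfunction(2) sum_squares_pos_iff by (simp add: power2_eq_square)

lemma inj_on_eigenfunction: "inj_on (eigenfunction l) (lat_eigenvalues l)"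
proof (rule inj_onI, rule ccontr)
  fix mu nu assume mu: "mu \<in> lat_eigenvalues l" and "nu \<in> lat_eigenvalues l"
    and eq: "eigenfunction l mu = eigenfunction l nu" and "mu \<noteq> nu"
  then have "(\<Sum>p\<in>lat_G l. eigenfunction l mu p * eigenfunction l nu p) = 0"
    by (intro eigenfunction_orthogonal)
  with eigenfunction_norm_pos[OF mu] eq show False
    by simp
qed

lemma supported_on_in_span:
  assumes "supported_on l f"
  shows "f \<in> fun_vs.span ((\<lambda>q p. if p = q then 1 else 0) ` lat_G l)"
proof -
  have "(\<Sum>q\<in>lat_G l. f q * (if p = q then 1 else 0)) = f p" for p
  proof -
    have "(\<Sum>q\<in>lat_G l. f q * (if p = q then 1 else 0)) = (\<Sum>q\<in>lat_G l. if p = q then f q else 0)"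
      by (rule sum.cong) auto
    also have "\<dots> = (if p \<in> lat_G l then f p else 0)"
      by (rule sum.delta'[OF finite_lat_G])
    also have "\<dots> = f p"
      using assms unfolding supported_on_def by metis
    finally show ?thesis .
  qed
  then have "f = (\<Sum>q\<in>lat_G l. scale_fun (f q) (\<lambda>p. if p = q then 1 else 0))"
    by (simp add: fun_eq_iff sum_fun_apply scale_fun_def)
  also have "\<dots> \<in> fun_vs.span ((\<lambda>q p. if p = q then 1 else 0) ` lat_G l)"
    by (intro fun_vs.span_sum fun_vs.span_scale fun_vs.span_base) auto
  finally show ?thesis .
qed

text \<open>Pairwise orthogonality with non-zero norms: pairing a vanishing linear combination with
  one of its members isolates that member's coefficient.\<close>

lemma independent_eigenfunctions: "fun_vs.independent (eigenfunction l ` lat_eigenvalues l)"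
  unfolding fun_vs.independent_explicit_finite_subsets
proof (intro allI impI ballI)
  fix S u w
  assume S: "S \<subseteq> eigenfunction l ` lat_eigenvalues l" "finite S"
    and comb: "(\<Sum>v\<in>S. scale_fun (u v) v) = 0" and w: "w \<in> S"
  obtain nu where nu: "nu \<in> lat_eigenvalues l" and w_eq: "w = eigenfunction l nu"
    using w S by blast
  have orth: "(\<Sum>p\<in>lat_G l. v p * w p) = 0" if v: "v \<in> S" and vw: "v \<noteq> w" for v
  proof -
    obtain mu where "mu \<in> lat_eigenvalues l" "v = eigenfunction l mu"
      using v S by blast
    with nu w_eq vw show ?thesis
      using eigenfunction_orthogonal by blast
  qed
  have "0 = (\<Sum>p\<in>lat_G l. (\<Sum>v\<in>S. u v * v p) * w p)"
    using fun_cong[OF comb] by (simp add: sum_fun_apply scale_fun_def)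
  also have "\<dots> = (\<Sum>v\<in>S. u v * (\<Sum>p\<in>lat_G l. v p * w p))"
    by (simp add: sum_distrib_left sum_distrib_right mult_ac sum.swap[of _ "lat_G l"])
  also have "\<dots> = u w * (\<Sum>p\<in>lat_G l. w p * w p)"
    using w orth S(2) by (subst sum.remove[of _ w]) (auto intro!: sum.neutral)
  finally show "u w = 0"
    using eigenfunction_norm_pos[OF nu] w_eq by simp
qed

lemma finite_lat_eigenvalues: "finite (lat_eigenvalues l)"
proof -
  have "eigenfunction l ` lat_eigenvalues l \<subseteq> fun_vs.span ((\<lambda>q p. if p = q then 1 else 0) ` lat_G l)"
    using eigenfunction(1) supported_on_in_span by blast
  with independent_eigenfunctions have "finite (eigenfunction l ` lat_eigenvalues l)"
    using fun_vs.independent_span_bound finite_lat_G by blast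
  then show ?thesis
    using inj_on_eigenfunction finite_imageD by blast
qed

lemma centred_harmonic_test:
  obtains h where "supported_on l h" "(\<Sum>p\<in>lat_G l. h p) = 0"
    "3 ^ l / 5 \<le> (\<Sum>p\<in>lat_G l. (h p)\<^sup>2)" "energy l h = 6 * (3/5) ^ l"
proof
  define c where "c = (\<Sum>p\<in>lat_G l. harmonic_test l p) / card (lat_G l)"
  let ?h = "\<lambda>p. if p \<in> lat_G l then harmonic_test l p - c else 0"
  show "supported_on l ?h"
    by (simp add: supported_on_def)
  have "card (lat_G l) \<noteq> 0"
    using finite_lat_G lat_G_nonempty by simp
  then show "(\<Sum>p\<in>lat_G l. ?h p) = 0"
    by (simp add: sum_subtractf c_def)
  show "3 ^ l / 5 \<le> (\<Sum>p\<in>lat_G l. (?h p)\<^sup>2)"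
    using sum_squares_harmonic_test_diff_ge[of l c] by simp
  have "energy l ?h = energy l (\<lambda>p. harmonic_test l p - c)"
    by (rule energy_cong) simp
  then show "energy l ?h = 6 * (3/5) ^ l"
    by (simp add: energy_diff_const energy_harmonic_test)
qed

lemma exists_small_lat_eigenvalue:
  assumes "l \<ge> 1"
  obtains m where "m \<in> lat_eigenvalues l" "0 < m" "m \<le> 30 / 5 ^ l"
proof -
  obtain h where h: "supported_on l h" "(\<Sum>p\<in>lat_G l. h p) = 0"
    and mass: "3 ^ l / 5 \<le> (\<Sum>p\<in>lat_G l. (h p)\<^sup>2)" and energy_h: "energy l h = 6 * (3/5) ^ l"
    by (rule centred_harmonic_test)
  have "(0::real) < 3 ^ l / 5"
    by simp
  with mass have "(\<Sum>p\<in>lat_G l. (h p)\<^sup>2) > 0"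
    by linarith
  then obtain g0 where g0: "supported_on l g0" "(\<Sum>p\<in>lat_G l. g0 p) = 0" "(\<Sum>p\<in>lat_G l. (g0 p)\<^sup>2) = 1"
    and min: "\<And>g. supported_on l g \<Longrightarrow> (\<Sum>p\<in>lat_G l. g p) = 0
           \<Longrightarrow> energy l g0 * (\<Sum>p\<in>lat_G l. (g p)\<^sup>2) \<le> energy l g"
    using energy_minimizer_exists[OF h] by blast
  show thesis
  proof
    show "energy l g0 \<in> lat_eigenvalues l"
      using g0 min by (rule energy_minimizer_eigenfunction)
    have "(15/2) / 5 ^ l \<le> energy l g0"
      using spec[OF poincare_inequality[OF assms, unfolded has_poincare_const_def], of g0] g0(2,3) by simp
    moreover have "(0::real) < (15/2) / 5 ^ l"
      by simp
    ultimately show "0 < energy l g0"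
      by linarith
    have "energy l g0 * (3 ^ l / 5) \<le> energy l g0 * (\<Sum>p\<in>lat_G l. (h p)\<^sup>2)"
      using mass energy_nonneg by (intro mult_left_mono)
    also have "\<dots> \<le> 6 * (3 / 5) ^ l"
      using min[OF h] energy_h by simp
    finally show "energy l g0 \<le> 30 / 5 ^ l"
      by (simp add: power_divide field_simps)
  qed
qed

theorem proposition5p3:
  fixes l :: nat
  assumes "l \<ge> 1"
  shows "(15/2) / 5 ^ l \<le> E1_neumann l \<and> E1_neumann l \<le> 60 / 5 ^ l"
proof -
  let ?X = "neumann_eigenvalues l - {0}"
  have fin: "finite ?X"
    by (simp add: neumann_eigenvalues_eq finite_lat_eigenvalues)
  obtain m where "m \<in> lat_eigenvalues l" "0 < m" and m_le: "m \<le> 30 / 5 ^ l"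
    using exists_small_lat_eigenvalue[OF assms] .
  then have m: "m \<in> ?X"
    by (simp add: neumann_eigenvalues_eq)
  have "Min ?X \<in> ?X"
    using fin m by (intro Min_in) auto
  then have "Min ?X \<in> lat_eigenvalues l" "Min ?X \<noteq> 0"
    by (simp_all add: neumann_eigenvalues_eq)
  then have "(15/2) / 5 ^ l \<le> Min ?X"
    by (rule lat_eigenvalue_ge[OF _ _ poincare_inequality[OF assms]])
  moreover have "Min ?X \<le> 30 / 5 ^ l"
    using Min_le[OF fin m] m_le by linarith
  ultimately show ?thesis
    by (simp add: E1_neumann_def divide_right_mono)
qed

end
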